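(* Two quadrilaterals $Q_1,Q_2$ in $K^2$ have the same bisectors (the same bisecting lines, each with the same midpoint) if and only if they have the same bisector fields.
   Context: $K$ is a field of characteristic $\neq 2$. Every line $L$ in $K^2$ has an equation $tX-uY+v=0$ normalized so that $t=1$ if $u=0$ and $u=1$ if $u\neq 0$; coefficients denoted $t_L,u_L,v_L$. A quadrilateral $Q=ABA'B'$ consists of four distinct lines $A,B,A',B'$ (sides), not all through one point, with adjacent sides ($A,B$; $B,A'$; $A',B'$; $B',A$) not parallel; opposite sides may be parallel. Vertices: $A\cap B$, $B\cap A'$, $A'\cap B'$, $B'\cap A$ (two may coincide if three sides are concurrent). The centroid is the average of the four vertices. Let $\alpha=t_Au_Bu_{A'}u_{B'}-u_At_Bu_{A'}u_{B'}+u_Au_Bt_{A'}u_{B'}-u_Au_Bu_{A'}t_{B'}$, $\beta=t_Au_Bt_{A'}u_{B'}-u_At_Bu_{A'}t_{B'}$, $\gamma=t_At_Bt_{A'}u_{B'}-t_At_Bu_{A'}t_{B'}+t_Au_Bt_{A'}t_{B'}-u_At_Bt_{A'}t_{B'}$, and $\langle \mathbf v,\mathbf w\rangle_Q=\mathbf v^T\begin{pmatrix}\gamma&-\beta\\-\beta&\alpha\end{pmatrix}\mathbf w$. Lines $\ell_1,\ell_2$ are $Q$-orthogonal if $\langle (u_{\ell_1},t_{\ell_1}),(u_{\ell_2},t_{\ell_2})\rangle_Q=0$. A line $\ell$ crosses a pair $\{\ell_1,\ell_2\}$ if distinct from both and not parallel to both; $\mathrm{mid}_{\{\ell_1,\ell_2\}}(\ell)$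 is the midpoint of the points where $\ell$ meets $\ell_1,\ell_2$ (the point at infinity of $\ell$ if one is at infinity). $\ell$ bisects $Q$ (is a bisector) if $\mathrm{mid}_{\mathsf P}(\ell)$ is the same for all pairs $\mathsf P$ among $\{A,A'\},\{B,B'\}$ that $\ell$ crosses; this common point is the midpoint of the bisector. A pair $\{\ell_1,\ell_2\}$ of bisectors (possibly $\ell_1=\ell_2$) is a $Q$-pair if the midpoint of their midpoints is the centroid of $Q$ and $\ell_1,\ell_2$ are $Q$-orthogonal. The bisector field of $Q$ is the collection of all $Q$-pairs of bisectors of $Q$. *)

theory Defs
  imports Main
begin

text \<open>A line in K^2 is stored by its normalized coefficients (t,u,v) of the
  equation  t X - u Y + v = 0, with t = 1 if u = 0 and u = 1 if u \<noteq> 0.\<close>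

type_synonym 'a line = "'a \<times> 'a \<times> 'a"

definition t_of :: "'a line \<Rightarrow> 'a" where "t_of l = fst l"
definition u_of :: "'a line \<Rightarrow> 'a" where "u_of l = fst (snd l)"
definition v_of :: "'a line \<Rightarrow> 'a" where "v_of l = snd (snd l)"

definition valid_line :: "'a::field line \<Rightarrow> bool" where
  "valid_line l \<longleftrightarrow> (u_of l = 0 \<and> t_of l = 1) \<or> u_of l = 1"

definition on_line :: "'a::field line \<Rightarrow> 'a \<times> 'a \<Rightarrow> bool" where
  "on_line l p \<longleftrightarrow> t_of l * fst p - u_of l * snd p + v_of l = 0"

definition parallel :: "'a::field line \<Rightarrow> 'a line \<Rightarrow> bool" where
  "parallel l1 l2 \<longleftrightarrow> t_of l1 * u_of l2 = t_of l2 * u_of l1"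

definition meet :: "'a::field line \<Rightarrow> 'a line \<Rightarrow> 'a \<times> 'a" where
  "meet l1 l2 = (THE p. on_line l1 p \<and> on_line l2 p)"

definition midpt :: "'a::field \<times> 'a \<Rightarrow> 'a \<times> 'a \<Rightarrow> 'a \<times> 'a" where
  "midpt p q = ((fst p + fst q) / 2, (snd p + snd q) / 2)"

text \<open>Points of the projective closure: affine points, and the point at infinity
  of a line, represented by the (normalized) direction coefficients (t,u) of the line.\<close>
datatype 'a ppoint = Aff "'a \<times> 'a" | Infty "'a \<times> 'a"

text \<open>A quadrilateral Q = A B A' B' given by its four sides in this order.\<close>
type_synonym 'a quad = "'a line \<times> 'a line \<times> 'a line \<times> 'a line"

definition quadrilateral :: "'a::field quad \<Rightarrow> bool" where
  "quadrilateral Q = (case Q of (A, B, A', B') \<Rightarrow>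
     valid_line A \<and> valid_line B \<and> valid_line A' \<and> valid_line B' \<and>
     distinct [A, B, A', B'] \<and>
     \<not> (\<exists>p. on_line A p \<and> on_line B p \<and> on_line A' p \<and> on_line B' p) \<and>
     \<not> parallel A B \<and> \<not> parallel B A' \<and> \<not> parallel A' B' \<and> \<not> parallel B' A)"

definition centroid :: "'a::field quad \<Rightarrow> 'a \<times> 'a" where
  "centroid Q = (case Q of (A, B, A', B') \<Rightarrow>
     (let p1 = meet A B; p2 = meet B A'; p3 = meet A' B'; p4 = meet B' A in
      ((fst p1 + fst p2 + fst p3 + fst p4) / 4, (snd p1 + snd p2 + snd p3 + snd p4) / 4)))"

definition q_alpha :: "'a::field quad \<Rightarrow> 'a" where
  "q_alpha Q = (case Q of (A, B, A', B') \<Rightarrow>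
     t_of A * u_of B * u_of A' * u_of B' - u_of A * t_of B * u_of A' * u_of B'
     + u_of A * u_of B * t_of A' * u_of B' - u_of A * u_of B * u_of A' * t_of B')"

definition q_beta :: "'a::field quad \<Rightarrow> 'a" where
  "q_beta Q = (case Q of (A, B, A', B') \<Rightarrow>
     t_of A * u_of B * t_of A' * u_of B' - u_of A * t_of B * u_of A' * t_of B')"

definition q_gamma :: "'a::field quad \<Rightarrow> 'a" where
  "q_gamma Q = (case Q of (A, B, A', B') \<Rightarrow>
     t_of A * t_of B * t_of A' * u_of B' - t_of A * t_of B * u_of A' * t_of B'
     + t_of A * u_of B * t_of A' * t_of B' - u_of A * t_of B * t_of A' * t_of B')"

definition q_inner :: "'a::field quad \<Rightarrow> 'a \<times> 'a \<Rightarrow> 'a \<times> 'a \<Rightarrow> 'a" where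
  "q_inner Q v w =
     fst v * (q_gamma Q * fst w - q_beta Q * snd w)
     + snd v * (- q_beta Q * fst w + q_alpha Q * snd w)"

definition q_orth :: "'a::field quad \<Rightarrow> 'a line \<Rightarrow> 'a line \<Rightarrow> bool" where
  "q_orth Q l1 l2 \<longleftrightarrow> q_inner Q (u_of l1, t_of l1) (u_of l2, t_of l2) = 0"

definition crosses :: "'a::field line \<Rightarrow> 'a line \<Rightarrow> 'a line \<Rightarrow> bool" where
  "crosses l l1 l2 \<longleftrightarrow> l \<noteq> l1 \<and> l \<noteq> l2 \<and> \<not> (parallel l l1 \<and> parallel l l2)"

text \<open>mid_{l1,l2}(l) (only meaningful when l crosses {l1,l2}).\<close>
definition mid :: "'a::field line \<Rightarrow> 'a line \<Rightarrow> 'a line \<Rightarrow> 'a ppoint" where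
  "mid l1 l2 l = (if parallel l l1 \<or> parallel l l2 then Infty (t_of l, u_of l)
                  else Aff (midpt (meet l l1) (meet l l2)))"

definition bisects :: "'a::field quad \<Rightarrow> 'a line \<Rightarrow> bool" where
  "bisects Q l = (case Q of (A, B, A', B') \<Rightarrow>
     valid_line l \<and> (crosses l A A' \<and> crosses l B B' \<longrightarrow> mid A A' l = mid B B' l))"

definition bisector_mid :: "'a::field quad \<Rightarrow> 'a line \<Rightarrow> 'a ppoint \<Rightarrow> bool" where
  "bisector_mid Q l m = (case Q of (A, B, A', B') \<Rightarrow>
     bisects Q l \<and> ((crosses l A A' \<and> m = mid A A' l) \<or> (crosses l B B' \<and> m = mid B B' l)))"

text \<open>Q-pair: the midpoint of the two midpoints is the centroid (this forces both
  midpoints to be affine) and the lines are Q-orthogonal.\<close>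
definition q_pair :: "'a::field quad \<Rightarrow> 'a line \<Rightarrow> 'a line \<Rightarrow> bool" where
  "q_pair Q l1 l2 \<longleftrightarrow> (\<exists>p1 p2. bisector_mid Q l1 (Aff p1) \<and> bisector_mid Q l2 (Aff p2)
      \<and> midpt p1 p2 = centroid Q) \<and> q_orth Q l1 l2"

definition bisector_field :: "'a::field quad \<Rightarrow> 'a line set set" where
  "bisector_field Q = {{l1, l2} | l1 l2. q_pair Q l1 l2}"

end

(*
  For a line L let f_L be its affine function t x - u y + v. The midpoint of the chord that a
  line l cuts out of two lines S, S' is the point of l where f_S f_S' is stationary along l.
  Hence the bisectors of Q = A B A' B' with their midpoints are exactly the pairs (l, M) with M on
  l at which both side products f_A f_A' and f_B f_B' are stationary along l. The quadratic
  functions (modulo constants) that are stationary along every side at the midpoint of that side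
  form precisely the pencil spanned by the two side products.

  If Q1 and Q2 have the same bisectors, then the sides of Q1, being bisectors of Q2, make the side
  products of Q2 stationary along the sides of Q1; if they have the same bisector field, then the
  opposite sides of Q2, being Q2-pairs, are Q1-pairs, and for a Q-pair {l1, l2} Q-orthogonality puts
  the quadratic part of f_l1 f_l2 into the pencil while the centroid condition removes the linear
  remainder. Either way the side products of Q2 lie in the pencil of Q1. A common pencil gives the
  same bisectors. It also gives the same centroid and proportional Q-forms, hence the same Q-pairs:
  the Jacobian determinant of the two side products is determined by the pencil up to a constant
  factor, and at the point centroid + X it equals a constant minus 2 <X, X>_Q.
*)
theory Submission
  imports Defs
begin

section \<open>Lines as affine functions\<close>

definition line_eval :: "'a::field line \<Rightarrow> 'a \<times> 'a \<Rightarrow> 'a" where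
  "line_eval l p = t_of l * fst p - u_of l * snd p + v_of l"

definition line_lin :: "'a::field line \<Rightarrow> 'a \<times> 'a \<Rightarrow> 'a" where
  "line_lin l X = t_of l * fst X - u_of l * snd X"

definition line_dir :: "'a line \<Rightarrow> 'a \<times> 'a" where
  "line_dir l = (u_of l, t_of l)"

definition offset :: "'a::field \<times> 'a \<Rightarrow> 'a \<Rightarrow> 'a \<times> 'a \<Rightarrow> 'a \<times> 'a" where
  "offset p s X = (fst p + s * fst X, snd p + s * snd X)"

lemma on_line_iff_eval: "on_line l p \<longleftrightarrow> line_eval l p = 0"
  by (simp add: on_line_def line_eval_def)

lemma parallel_iff_lin_dir: "parallel l1 l2 \<longleftrightarrow> line_lin l1 (line_dir l2) = 0"
  by (auto simp: parallel_def line_lin_def line_dir_def algebra_simps)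

lemma line_lin_dir_self [simp]: "line_lin l (line_dir l) = 0"
  by (simp add: line_lin_def line_dir_def mult.commute)

lemma parallel_refl: "parallel l l"
  by (simp add: parallel_def)

lemma parallel_sym: "parallel l1 l2 \<Longrightarrow> parallel l2 l1"
  by (simp add: parallel_def)

lemma nonparallel_lin_dir:
  "\<not> parallel l1 l2 \<Longrightarrow> line_lin l1 (line_dir l2) \<noteq> 0 \<and> line_lin l2 (line_dir l1) \<noteq> 0"
  using parallel_iff_lin_dir parallel_sym by metis

lemma parallel_valid_coeffs:
  assumes "valid_line l1" "valid_line l2" "parallel l1 l2"
  shows "t_of l1 = t_of l2 \<and> u_of l1 = u_of l2"
  using assms unfolding valid_line_def parallel_def by auto

lemma parallel_trans:
  assumes "valid_line l1" "valid_line l2" "valid_line l3" "parallel l1 l2" "parallel l2 l3"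
  shows "parallel l1 l3"
  using parallel_valid_coeffs[OF assms(1,2,4)] parallel_valid_coeffs[OF assms(2,3,5)]
  by (simp add: parallel_def)

lemma parallel_common_point_eq:
  assumes "valid_line l1" "valid_line l2" "parallel l1 l2"
    and "line_eval l1 p = 0" "line_eval l2 p = 0"
  shows "l1 = l2"
proof -
  from parallel_valid_coeffs[OF assms(1-3)] have "t_of l1 = t_of l2" "u_of l1 = u_of l2" by auto
  moreover from calculation assms(4,5) have "v_of l1 = v_of l2"
    unfolding line_eval_def by (metis add_diff_cancel_left')
  ultimately show ?thesis by (cases l1; cases l2) (simp add: t_of_def u_of_def v_of_def)
qed

lemma line_eval_offset: "line_eval l (offset p s X) = line_eval l p + s * line_lin l X"
  by (simp add: offset_def line_eval_def line_lin_def algebra_simps)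

lemma on_line_param:
  assumes "valid_line l" "line_eval l p = 0" "line_eval l r = 0"
  shows "\<exists>s. r = offset p s (line_dir l)"
proof (cases "u_of l = 0")
  case True
  with assms have "t_of l = 1" "fst r = fst p"
    unfolding valid_line_def line_eval_def by (simp, algebra)
  with True have "r = offset p (snd r - snd p) (line_dir l)"
    by (simp add: offset_def line_dir_def prod_eq_iff)
  then show ?thesis by blast
next
  case False
  with assms have "u_of l = 1" "snd r = snd p + (fst r - fst p) * t_of l"
    unfolding valid_line_def line_eval_def by (simp, algebra)
  then have "r = offset p (fst r - fst p) (line_dir l)"
    by (simp add: offset_def line_dir_def prod_eq_iff)
  then show ?thesis by blast
qed

lemma four_neq_zero: "(2::'a::field) \<noteq> 0 \<Longrightarrow> (4::'a) \<noteq> 0"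
  by (metis mult_2_right no_zero_divisors numeral_Bit0)

lemma line_eval_midpt:
  assumes "(2::'a::field) \<noteq> 0"
  shows "line_eval l (midpt p r) = (line_eval l p + line_eval l (r::'a \<times> 'a)) / 2"
  using assms four_neq_zero[OF assms] by (simp add: line_eval_def midpt_def field_simps)

lemma midpt_comm: "midpt p r = midpt r p"
  by (simp add: midpt_def add.commute)

lemma meet_eq:
  assumes "\<not> parallel l1 l2"
  shows "meet l1 l2 =
    ((v_of l1 * u_of l2 - u_of l1 * v_of l2) / (u_of l1 * t_of l2 - t_of l1 * u_of l2),
     (t_of l2 * v_of l1 - t_of l1 * v_of l2) / (u_of l1 * t_of l2 - t_of l1 * u_of l2))"
proof -
  define d where "d = u_of l1 * t_of l2 - t_of l1 * u_of l2"
  have d: "d \<noteq> 0" using assms by (auto simp: d_def parallel_def algebra_simps)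
  define p0 where
    "p0 = ((v_of l1 * u_of l2 - u_of l1 * v_of l2) / d, (t_of l2 * v_of l1 - t_of l1 * v_of l2) / d)"
  have "on_line l1 p0 \<and> on_line l2 p0"
  proof -
    have "t_of l * fst p0 - u_of l * snd p0 + v_of l =
      (t_of l * (v_of l1 * u_of l2 - u_of l1 * v_of l2) - u_of l * (t_of l2 * v_of l1 - t_of l1 * v_of l2)
        + v_of l * d) / d" for l
      using d by (simp add: p0_def field_simps)
    then show ?thesis unfolding on_line_def by (simp add: d_def algebra_simps)
  qed
  moreover have "p = p0" if "on_line l1 p \<and> on_line l2 p" for p
  proof -
    from that have "fst p * d = v_of l1 * u_of l2 - u_of l1 * v_of l2"
      "snd p * d = t_of l2 * v_of l1 - t_of l1 * v_of l2"
      unfolding on_line_def d_def by algebra+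
    with d show ?thesis by (simp add: p0_def prod_eq_iff eq_divide_eq)
  qed
  ultimately have "meet l1 l2 = p0" unfolding meet_def by (rule the_equality) blast
  then show ?thesis by (simp add: p0_def d_def)
qed

definition meet_hom :: "'a::field line \<Rightarrow> 'a line \<Rightarrow> 'a \<times> 'a \<times> 'a" where
  "meet_hom l1 l2 = (v_of l1 * u_of l2 - u_of l1 * v_of l2, t_of l2 * v_of l1 - t_of l1 * v_of l2,
     u_of l1 * t_of l2 - t_of l1 * u_of l2)"

definition line_eval_hom :: "'a::field line \<Rightarrow> 'a \<times> 'a \<times> 'a \<Rightarrow> 'a" where
  "line_eval_hom l P = t_of l * fst P - u_of l * fst (snd P) + v_of l * snd (snd P)"

lemma meet_hom_weight_nonzero: "\<not> parallel l1 l2 \<Longrightarrow> snd (snd (meet_hom l1 l2)) \<noteq> 0"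
  by (auto simp: meet_hom_def parallel_def algebra_simps)

lemma meet_from_hom:
  assumes "\<not> parallel l1 l2" "meet_hom l1 l2 = (x, y, z)"
  shows "meet l1 l2 = (x / z, y / z)"
  using assms by (auto simp: meet_eq meet_hom_def)

lemma line_eval_dehom: "z \<noteq> 0 \<Longrightarrow> line_eval l (x / z, y / z) * z = line_eval_hom l (x, y, z)"
  by (simp add: line_eval_def line_eval_hom_def field_simps)

lemma line_eval_meet:
  assumes "\<not> parallel l1 l2"
  shows "line_eval l (meet l1 l2) * snd (snd (meet_hom l1 l2)) = line_eval_hom l (meet_hom l1 l2)"
proof -
  obtain x y z where h: "meet_hom l1 l2 = (x, y, z)" by (cases "meet_hom l1 l2") auto
  moreover have "z \<noteq> 0" using meet_hom_weight_nonzero[OF assms] h by simp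
  ultimately show ?thesis by (simp add: meet_from_hom[OF assms h] line_eval_dehom)
qed

lemma meet_on_lines:
  assumes "\<not> parallel l1 l2"
  shows "line_eval l1 (meet l1 l2) = 0" "line_eval l2 (meet l1 l2) = 0"
  using line_eval_meet[OF assms, of l1] line_eval_meet[OF assms, of l2]
    meet_hom_weight_nonzero[OF assms]
  by (auto simp: line_eval_hom_def meet_hom_def algebra_simps)

section \<open>Quadratic polynomials modulo constants\<close>

text \<open>A tuple (a, b, c, d, e) stands for the polynomial a x^2 + b x y + c y^2 + d x + e y, a
  polynomial of degree at most 2 modulo constants; only its derivatives are ever used.\<close>

type_synonym 'a qpoly = "'a \<times> 'a \<times> 'a \<times> 'a \<times> 'a"

definition qderiv :: "'a::field qpoly \<Rightarrow> 'a \<times> 'a \<Rightarrow> 'a \<times> 'a \<Rightarrow> 'a" where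
  "qderiv g p X = (case g of (a, b, c, d, e) \<Rightarrow>
     (2 * a * fst p + b * snd p + d) * fst X + (b * fst p + 2 * c * snd p + e) * snd X)"

definition qquad :: "'a::field qpoly \<Rightarrow> 'a \<times> 'a \<Rightarrow> 'a" where
  "qquad g X = (case g of (a, b, c, d, e) \<Rightarrow>
     a * fst X * fst X + b * fst X * snd X + c * snd X * snd X)"

definition qpolar :: "'a::field qpoly \<Rightarrow> 'a \<times> 'a \<Rightarrow> 'a \<times> 'a \<Rightarrow> 'a" where
  "qpolar g Y X = (case g of (a, b, c, d, e) \<Rightarrow>
     (2 * a * fst Y + b * snd Y) * fst X + (b * fst Y + 2 * c * snd Y) * snd X)"

definition line_prod :: "'a::field line \<Rightarrow> 'a line \<Rightarrow> 'a qpoly" where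
  "line_prod L L' = (t_of L * t_of L', - (t_of L * u_of L' + u_of L * t_of L'), u_of L * u_of L',
     t_of L * v_of L' + t_of L' * v_of L, - (u_of L * v_of L' + u_of L' * v_of L))"

definition qcomb :: "'a::field \<Rightarrow> 'a qpoly \<Rightarrow> 'a \<Rightarrow> 'a qpoly \<Rightarrow> 'a qpoly" where
  "qcomb x g y h = (case g of (a, b, c, d, e) \<Rightarrow> case h of (a', b', c', d', e') \<Rightarrow>
     (x * a + y * a', x * b + y * b', x * c + y * c', x * d + y * d', x * e + y * e'))"

lemma qderiv_line_prod:
  "qderiv (line_prod L L') p X = line_eval L p * line_lin L' X + line_eval L' p * line_lin L X"
  by (simp add: qderiv_def line_prod_def line_eval_def line_lin_def algebra_simps)

lemma qquad_line_prod: "qquad (line_prod L L') X = line_lin L X * line_lin L' X"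
  by (simp add: qquad_def line_prod_def line_lin_def algebra_simps)

lemma qpolar_line_prod:
  "qpolar (line_prod L L') Y X = line_lin L Y * line_lin L' X + line_lin L' Y * line_lin L X"
  by (simp add: qpolar_def line_prod_def line_lin_def algebra_simps)

lemma line_prod_commute: "line_prod L L' = line_prod L' L"
  by (simp add: line_prod_def algebra_simps)

lemma qderiv_qcomb: "qderiv (qcomb x g y h) p X = x * qderiv g p X + y * qderiv h p X"
  by (cases g; cases h) (simp add: qderiv_def qcomb_def algebra_simps)

lemma qquad_qcomb: "qquad (qcomb x g y h) X = x * qquad g X + y * qquad h X"
  by (cases g; cases h) (simp add: qquad_def qcomb_def algebra_simps)

lemma qpolar_qcomb: "qpolar (qcomb x g y h) Y X = x * qpolar g Y X + y * qpolar h Y X"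
  by (cases g; cases h) (simp add: qpolar_def qcomb_def algebra_simps)

lemma qderiv_offset: "qderiv g (offset p s Y) X = qderiv g p X + s * qpolar g Y X"
  by (cases g) (simp add: qderiv_def qpolar_def offset_def algebra_simps)

lemma qpolar_self: "qpolar g X X = 2 * qquad g X"
  by (cases g) (simp add: qpolar_def qquad_def algebra_simps)

lemma qderiv_const_along_line:
  assumes "valid_line L" "line_eval L P = 0" "line_eval L R = 0" "qquad g (line_dir L) = 0"
  shows "qderiv g R (line_dir L) = qderiv g P (line_dir L)"
proof -
  obtain s where "R = offset P s (line_dir L)" using on_line_param[OF assms(1-3)] by blast
  then show ?thesis using assms(4) by (simp add: qderiv_offset qpolar_self)
qed

lemma qderiv_zero [simp]: "qderiv (0, 0, 0, 0, 0) p X = 0"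
  by (simp add: qderiv_def)

lemma qpoly_eqI:
  assumes two: "(2::'a::field) \<noteq> 0" and h: "\<And>M X. qderiv g M X = qderiv h M (X::'a \<times> 'a)"
  shows "g = h"
proof -
  obtain a b c d e where g: "g = (a, b, c, d, e)" by (cases g) auto
  obtain a' b' c' d' e' where h': "h = (a', b', c', d', e')" by (cases h) auto
  have "d = d'" "e = e'" "2 * a + d = 2 * a' + d'" "b + e = b' + e'" "2 * c + e = 2 * c' + e'"
    using h[of "(0, 0)" "(1, 0)"] h[of "(0, 0)" "(0, 1)"] h[of "(1, 0)" "(1, 0)"]
      h[of "(1, 0)" "(0, 1)"] h[of "(0, 1)" "(0, 1)"]
    by (simp_all add: g h' qderiv_def)
  with two show ?thesis by (simp add: g h')
qed

lemma qpoly_eq_zero_from_frame: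
  fixes g :: "'a::field qpoly"
  assumes two: "(2::'a) \<noteq> 0"
    and det: "fst D1 * snd D2 - snd D1 * fst D2 \<noteq> 0"
    and h: "qderiv g P D1 = 0" "qderiv g P D2 = 0"
      "qpolar g D1 D1 = 0" "qpolar g D2 D2 = 0" "qpolar g D1 D2 = 0"
  shows "g = (0, 0, 0, 0, 0)"
proof -
  obtain a b c d e where g: "g = (a, b, c, d, e)" by (cases g) auto
  define \<delta> where "\<delta> = fst D1 * snd D2 - snd D1 * fst D2"
  from h(3-5) have "2 * \<delta> ^ 3 * a = 0" "\<delta> ^ 3 * b = 0" "2 * \<delta> ^ 3 * c = 0"
    unfolding g qpolar_def \<delta>_def prod.case by algebra+
  with two det have abc: "a = 0" "b = 0" "c = 0" by (simp_all add: \<delta>_def)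
  with h(1,2) have "\<delta> * d = 0" "\<delta> * e = 0"
    unfolding g qderiv_def \<delta>_def prod.case by algebra+
  with abc det show ?thesis by (simp add: g \<delta>_def)
qed

section \<open>Bisectors as stationary points\<close>

lemma qderiv_line_prod_chord_midpt:
  assumes two: "(2::'a::field) \<noteq> 0"
    and l: "valid_line (l::'a line)" "line_eval l P = 0" "line_eval l R = 0"
    and T: "line_eval T P = 0"
  shows "qderiv (line_prod T U) (midpt P R) (line_dir l) = line_lin T (line_dir l) * line_eval U R"
proof -
  obtain s where R: "R = offset P s (line_dir l)" using on_line_param[OF l] by blast
  have M: "midpt P R = offset P (s / 2) (line_dir l)"
    using two by (simp add: R midpt_def offset_def field_simps)
  have "line_eval U R = line_eval U P + s * line_lin U (line_dir l)"
    by (simp add: R line_eval_offset)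
  then show ?thesis
    using T two by (simp add: M qderiv_line_prod line_eval_offset field_simps)
qed

lemma offset_eq_self_iff: "valid_line l \<Longrightarrow> offset p s (line_dir l) = p \<longleftrightarrow> s = 0"
  by (auto simp: offset_def line_dir_def valid_line_def prod_eq_iff)

lemma qderiv_line_prod_nonparallel:
  assumes two: "(2::'a::field) \<noteq> 0" and l: "valid_line (l::'a line)"
    and np: "\<not> parallel l S" "\<not> parallel l S'" and M: "line_eval l M = 0"
  shows "qderiv (line_prod S S') M (line_dir l) = 0 \<longleftrightarrow> M = midpt (meet l S) (meet l S')"
proof -
  define P R where "P = meet l S" and "R = meet l S'"
  have P: "line_eval l P = 0" "line_eval S P = 0" and R: "line_eval l R = 0" "line_eval S' R = 0"
    using meet_on_lines[OF np(1)] meet_on_lines[OF np(2)] by (simp_all add: P_def R_def)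
  have "line_eval l (midpt P R) = 0" using P(1) R(1) by (simp add: line_eval_midpt[OF two])
  then obtain s where Ms: "M = offset (midpt P R) s (line_dir l)" using on_line_param[OF l _ M] by blast
  have "qderiv (line_prod S S') (midpt P R) (line_dir l) = 0"
    using qderiv_line_prod_chord_midpt[OF two l P(1) R(1) P(2)] R(2) by simp
  then have "qderiv (line_prod S S') M (line_dir l)
      = s * (2 * (line_lin S (line_dir l) * line_lin S' (line_dir l)))"
    by (simp add: Ms qderiv_offset qpolar_line_prod)
  moreover have "line_lin S (line_dir l) \<noteq> 0" "line_lin S' (line_dir l) \<noteq> 0"
    using np nonparallel_lin_dir by blast+
  ultimately show ?thesis using two offset_eq_self_iff[OF l] by (simp add: Ms P_def R_def)
qed

lemma qderiv_line_prod_parallel: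
  assumes "valid_line l" "valid_line S" "parallel l S" "l \<noteq> S" "\<not> parallel l S'"
    and "line_eval l M = 0"
  shows "qderiv (line_prod S S') M (line_dir l) \<noteq> 0"
proof -
  have "line_lin S (line_dir l) = 0" using assms(3) parallel_sym parallel_iff_lin_dir by metis
  moreover have "line_lin S' (line_dir l) \<noteq> 0" using assms(5) nonparallel_lin_dir by blast
  moreover have "line_eval S M \<noteq> 0" using parallel_common_point_eq assms by metis
  ultimately show ?thesis by (simp add: qderiv_line_prod)
qed

lemma mid_crossing_iff_stationary:
  assumes two: "(2::'a::field) \<noteq> 0" and v: "valid_line (l::'a line)" "valid_line S" "valid_line S'"
    and c: "crosses l S S'"
  shows "mid S S' l = Aff M \<longleftrightarrow>
    line_eval l M = 0 \<and> qderiv (line_prod S S') M (line_dir l) = 0"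
proof (cases "parallel l S \<or> parallel l S'")
  case True
  have "qderiv (line_prod S S') M (line_dir l) \<noteq> 0" if "line_eval l M = 0"
    using True c qderiv_line_prod_parallel[OF v(1,2) _ _ _ that]
      qderiv_line_prod_parallel[OF v(1,3) _ _ _ that] line_prod_commute
    unfolding crosses_def by metis
  with True show ?thesis by (auto simp: mid_def)
next
  case False
  then have "mid S S' l = Aff (midpt (meet l S) (meet l S'))" by (simp add: mid_def)
  moreover have "line_eval l (midpt (meet l S) (meet l S')) = 0"
    using False meet_on_lines[of l S] meet_on_lines[of l S'] by (simp add: line_eval_midpt[OF two])
  ultimately show ?thesis using False qderiv_line_prod_nonparallel[OF two v(1), of S S' M] by auto
qed

lemma not_crosses_stationary:
  assumes "\<not> crosses l S S'" "line_eval l M = 0"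
  shows "qderiv (line_prod S S') M (line_dir l) = 0"
proof -
  from assms(1) have "l = S \<or> l = S' \<or> parallel l S \<and> parallel l S'" by (auto simp: crosses_def)
  then show ?thesis
    using assms(2) parallel_iff_lin_dir[of S l] parallel_iff_lin_dir[of S' l]
      parallel_sym[of l S] parallel_sym[of l S'] by (auto simp: qderiv_line_prod)
qed

lemma not_crosses_parallel: "\<not> crosses l S S' \<Longrightarrow> parallel l S \<or> parallel l S'"
  by (auto simp: crosses_def parallel_refl)

lemma nonparallel_crosses: "\<not> parallel l S \<Longrightarrow> \<not> parallel l S' \<Longrightarrow> crosses l S S'"
  by (auto simp: crosses_def parallel_refl)

lemma mid_nonparallel: "\<not> parallel l S \<Longrightarrow> \<not> parallel l S' \<Longrightarrow> \<exists>M. mid S S' l = Aff M"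
  by (simp add: mid_def)

lemma mid_Infty_parallel: "mid S S' l = Infty z \<Longrightarrow> parallel l S \<or> parallel l S'"
  by (auto simp: mid_def split: if_splits)

definition stationary :: "'a::field line \<Rightarrow> 'a line \<Rightarrow> 'a line \<Rightarrow> 'a line \<Rightarrow> 'a line \<Rightarrow> 'a \<times> 'a \<Rightarrow> bool"
  where "stationary A B A' B' l M \<longleftrightarrow> valid_line l \<and> line_eval l M = 0 \<and>
    qderiv (line_prod A A') M (line_dir l) = 0 \<and> qderiv (line_prod B B') M (line_dir l) = 0"

lemma quadrilateralD:
  assumes "quadrilateral (A, B, A', B')"
  shows "valid_line A" "valid_line B" "valid_line A'" "valid_line B'"
    "\<not> parallel A B" "\<not> parallel B A'" "\<not> parallel A' B'" "\<not> parallel B' A"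
    "A \<noteq> B" "A \<noteq> A'" "A \<noteq> B'" "B \<noteq> A'" "B \<noteq> B'" "A' \<noteq> B'"
  using assms by (auto simp: quadrilateral_def)

lemma quadrilateral_no_common_point:
  assumes "quadrilateral (A, B, A', B')"
  shows "\<not> (line_eval A p = 0 \<and> line_eval B p = 0 \<and> line_eval A' p = 0 \<and> line_eval B' p = 0)"
  using assms unfolding quadrilateral_def prod.case on_line_iff_eval by blast

lemma quadrilateral_rotate: "quadrilateral (A, B, A', B') \<Longrightarrow> quadrilateral (B, A', B', A)"
  unfolding quadrilateral_def by auto

lemma quadrilateral_parallel_opposite:
  assumes q: "quadrilateral (A, B, A', B')" and l: "valid_line l"
    and "parallel l A \<or> parallel l A'"
  shows "\<not> parallel l B \<and> \<not> parallel l B'"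
proof -
  have "parallel X Y" if "parallel l X" "parallel l Y" "valid_line X" "valid_line Y" for X Y
    using parallel_trans[OF that(3) l that(4) parallel_sym[OF that(1)] that(2)] .
  then show ?thesis using assms(3) quadrilateralD[OF q] parallel_sym by metis
qed

lemma quadrilateral_crosses_opposite:
  assumes q: "quadrilateral (A, B, A', B')" and l: "valid_line l"
  shows "parallel l A \<or> parallel l A' \<Longrightarrow> crosses l B B' \<and> (\<exists>M. mid B B' l = Aff M)"
    and "parallel l B \<or> parallel l B' \<Longrightarrow> crosses l A A' \<and> (\<exists>M. mid A A' l = Aff M)"
  using quadrilateral_parallel_opposite[OF q l]
    quadrilateral_parallel_opposite[OF quadrilateral_rotate[OF q] l] nonparallel_crosses mid_nonparallel by blast+

lemma bisector_mid_iff_stationary: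
  assumes two: "(2::'a::field) \<noteq> 0" and q: "quadrilateral (A, B, A', B')"
  shows "bisector_mid (A, B, A', B') l m \<longleftrightarrow> (\<exists>M. m = Aff M \<and> stationary A B A' B' (l::'a line) M)"
proof (cases "valid_line l")
  case False
  then show ?thesis by (simp add: bisector_mid_def bisects_def stationary_def)
next
  case l: True
  note f = quadrilateralD[OF q]
  have crossA: "crosses l A A' \<Longrightarrow> mid A A' l = Aff M \<longleftrightarrow>
      line_eval l M = 0 \<and> qderiv (line_prod A A') M (line_dir l) = 0" for M
    using mid_crossing_iff_stationary[OF two l f(1,3)] .
  have crossB: "crosses l B B' \<Longrightarrow> mid B B' l = Aff M \<longleftrightarrow>
      line_eval l M = 0 \<and> qderiv (line_prod B B') M (line_dir l) = 0" for M
    using mid_crossing_iff_stationary[OF two l f(2,4)] .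
  note opp = quadrilateral_crosses_opposite[OF q l]
  show ?thesis
  proof
    assume "bisector_mid (A, B, A', B') l m"
    then have bis: "crosses l A A' \<and> crosses l B B' \<Longrightarrow> mid A A' l = mid B B' l"
      and m: "(crosses l A A' \<and> m = mid A A' l) \<or> (crosses l B B' \<and> m = mid B B' l)"
      by (auto simp: bisector_mid_def bisects_def)
    obtain M where M: "m = Aff M"
    proof (cases m)
      case (Infty z)
      \<comment> \<open>then l is parallel to a side of one pair, so it crosses the other pair at an affine point\<close>
      then have False
        using m bis opp mid_Infty_parallel[of A A' l z] mid_Infty_parallel[of B B' l z]
        by (metis ppoint.distinct(1))
      then show ?thesis ..
    qed
    then have "line_eval l M = 0" using m crossA crossB by metis
    then show "\<exists>M. m = Aff M \<and> stationary A B A' B' l M"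
      using M m bis crossA crossB not_crosses_stationary l by (metis stationary_def)
  next
    assume "\<exists>M. m = Aff M \<and> stationary A B A' B' l M"
    then obtain M where M: "m = Aff M" "stationary A B A' B' l M" by blast
    then have "crosses l A A' \<Longrightarrow> mid A A' l = m" "crosses l B B' \<Longrightarrow> mid B B' l = m"
      using crossA crossB by (auto simp: stationary_def)
    moreover have "crosses l A A' \<or> crosses l B B'" using opp(1) not_crosses_parallel by blast
    ultimately show "bisector_mid (A, B, A', B') l m"
      using l by (auto simp: bisector_mid_def bisects_def)
  qed
qed

section \<open>The pencil of the side products\<close>

definition sides_stationary :: "'a::field line \<Rightarrow> 'a line \<Rightarrow> 'a line \<Rightarrow> 'a line \<Rightarrow> 'a qpoly \<Rightarrow> bool"
  where "sides_stationary A B A' B' g \<longleftrightarrow>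
    qderiv g (midpt (meet B' A) (meet A B)) (line_dir A) = 0 \<and>
    qderiv g (midpt (meet A B) (meet B A')) (line_dir B) = 0 \<and>
    qderiv g (midpt (meet B A') (meet A' B')) (line_dir A') = 0 \<and>
    qderiv g (midpt (meet A' B') (meet B' A)) (line_dir B') = 0"

lemma sides_stationary_rotate: "sides_stationary B A' B' A g \<longleftrightarrow> sides_stationary A B A' B' g"
  by (auto simp: sides_stationary_def)

lemma sides_stationary_qcomb:
  "sides_stationary A B A' B' g \<Longrightarrow> sides_stationary A B A' B' h
    \<Longrightarrow> sides_stationary A B A' B' (qcomb x g y h)"
  by (simp add: sides_stationary_def qderiv_qcomb)

lemma quadrilateral_vertices:
  assumes "quadrilateral (A, B, A', B')"
  shows "line_eval A (meet A B) = 0" "line_eval B (meet A B) = 0"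
    "line_eval B (meet B A') = 0" "line_eval A' (meet B A') = 0"
    "line_eval A' (meet A' B') = 0" "line_eval B' (meet A' B') = 0"
    "line_eval B' (meet B' A) = 0" "line_eval A (meet B' A) = 0"
  using meet_on_lines[OF quadrilateralD(5)[OF assms]] meet_on_lines[OF quadrilateralD(6)[OF assms]]
    meet_on_lines[OF quadrilateralD(7)[OF assms]] meet_on_lines[OF quadrilateralD(8)[OF assms]]
  by simp_all

lemma sides_stationary_opposite_prod:
  assumes two: "(2::'a::field) \<noteq> 0" and q: "quadrilateral (A, B, A', B')"
  shows "sides_stationary A B A' B' (line_prod A (A'::'a line))"
proof -
  note V = quadrilateral_vertices[OF q] and f = quadrilateralD[OF q]
  have "qderiv (line_prod A A') (midpt (meet B' A) (meet A B)) (line_dir A) = 0"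
    using V(1,8) by (simp add: qderiv_line_prod line_eval_midpt[OF two])
  moreover have "qderiv (line_prod A A') (midpt (meet A B) (meet B A')) (line_dir B) = 0"
    using qderiv_line_prod_chord_midpt[OF two f(2) V(2) V(3) V(1)] V(4) by simp
  moreover have "qderiv (line_prod A A') (midpt (meet B A') (meet A' B')) (line_dir A') = 0"
    using V(4,5) by (simp add: qderiv_line_prod line_eval_midpt[OF two])
  moreover have "qderiv (line_prod A' A) (midpt (meet A' B') (meet B' A)) (line_dir B') = 0"
    using qderiv_line_prod_chord_midpt[OF two f(4) V(6) V(7) V(5)] V(8) by simp
  ultimately show ?thesis by (simp add: sides_stationary_def line_prod_commute[of A' A])
qed

lemma sides_stationary_side_prods:
  assumes two: "(2::'a::field) \<noteq> 0" and q: "quadrilateral (A, B, A', B')"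
  shows "sides_stationary A B A' B' (line_prod A (A'::'a line))"
    "sides_stationary A B A' B' (line_prod B B')"
  using sides_stationary_opposite_prod[OF two q]
    sides_stationary_opposite_prod[OF two quadrilateral_rotate[OF q]]
  by (simp_all add: sides_stationary_rotate)

lemma stationary_sides:
  assumes two: "(2::'a::field) \<noteq> 0" and q: "quadrilateral (A, B, A', B')"
  shows "stationary A B A' B' A (midpt (meet B' A) (meet A B))"
    "stationary A B A' B' B (midpt (meet A B) (meet B A'))"
    "stationary A B A' B' A' (midpt (meet B A') (meet A' B'))"
    "stationary A B A' B' B' (midpt (meet A' B') (meet B' (A::'a line)))"
  using sides_stationary_side_prods[OF two q] quadrilateral_vertices[OF q] quadrilateralD(1-4)[OF q]
  by (auto simp: stationary_def sides_stationary_def line_eval_midpt[OF two])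

lemma eight_neq_zero: "(2::'a::field) \<noteq> 0 \<Longrightarrow> (8::'a) \<noteq> 0"
  by (metis four_neq_zero mult_2_right no_zero_divisors numeral_Bit0)

lemma midpt_opposite_side_midpts:
  assumes two: "(2::'a::field) \<noteq> 0"
  shows "midpt (midpt (meet B' A) (meet A B)) (midpt (meet B A') (meet A' B')) = centroid (A, B, A', B')"
    "midpt (midpt (meet A B) (meet B A')) (midpt (meet A' B') (meet B' A)) = centroid (A, B, A', (B'::'a line))"
  using two four_neq_zero[OF two] eight_neq_zero[OF two]
  by (simp_all add: midpt_def centroid_def Let_def field_simps)

lemma q_orth_opposite_sides:
  "q_orth (A, B, A', B') A A'" "q_orth (A, B, A', B') B B'"
  unfolding q_orth_def q_inner_def q_alpha_def q_beta_def q_gamma_def prod.case fst_conv snd_conv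
  by algebra+

lemma q_pair_opposite_sides:
  assumes two: "(2::'a::field) \<noteq> 0" and q: "quadrilateral (A, B, A', B')"
  shows "q_pair (A, B, A', B') A A'" "q_pair (A, B, A', B') B (B'::'a line)"
proof -
  note S = stationary_sides[OF two q] and C = midpt_opposite_side_midpts[OF two]
    and bm = bisector_mid_iff_stationary[OF two q]
  show "q_pair (A, B, A', B') A A'"
    using S(1,3) C(1) q_orth_opposite_sides(1) bm unfolding q_pair_def by metis
  show "q_pair (A, B, A', B') B B'"
    using S(2,4) C(2) q_orth_opposite_sides(2) bm unfolding q_pair_def by metis
qed

lemma sides_stationary_null_directions:
  assumes two: "(2::'a::field) \<noteq> 0" and q: "quadrilateral (A, B, A', B')"
    and r: "sides_stationary A B A' B' r"
    and null: "qquad r (line_dir A) = 0" "qquad r (line_dir B) = 0"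
  shows "\<exists>k. \<forall>M X. qderiv r M X = k * qderiv (line_prod A (B::'a line)) M X"
proof -
  note V = quadrilateral_vertices[OF q] and f = quadrilateralD[OF q]
  define V1 where "V1 = meet A B"
  define k where "k = qpolar r (line_dir A) (line_dir B)
    / (line_lin B (line_dir A) * line_lin A (line_dir B))"
  define s where "s = qcomb 1 r (- k) (line_prod A B)"
  have n: "line_lin A (line_dir B) \<noteq> 0" "line_lin B (line_dir A) \<noteq> 0"
    using nonparallel_lin_dir[OF f(5)] by auto
  have "line_eval A (midpt (meet B' A) (meet A B)) = 0" "line_eval B (midpt (meet A B) (meet B A')) = 0"
    using V by (simp_all add: line_eval_midpt[OF two])
  then have "qderiv r V1 (line_dir A) = qderiv r (midpt (meet B' A) (meet A B)) (line_dir A)"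
    "qderiv r V1 (line_dir B) = qderiv r (midpt (meet A B) (meet B A')) (line_dir B)"
    using qderiv_const_along_line[OF f(1) _ V(1) null(1)] qderiv_const_along_line[OF f(2) _ V(2) null(2)]
    by (simp_all add: V1_def)
  then have rV1: "qderiv r V1 (line_dir A) = 0" "qderiv r V1 (line_dir B) = 0"
    using r by (simp_all add: sides_stationary_def)
  have "s = (0, 0, 0, 0, 0)"
  proof (rule qpoly_eq_zero_from_frame[OF two, of "line_dir A" "line_dir B" s V1])
    show "fst (line_dir A) * snd (line_dir B) - snd (line_dir A) * fst (line_dir B) \<noteq> 0"
      using n(1) by (simp add: line_dir_def line_lin_def algebra_simps)
    show "qderiv s V1 (line_dir A) = 0" "qderiv s V1 (line_dir B) = 0"
      using rV1 V(1,2) by (simp_all add: s_def qderiv_qcomb qderiv_line_prod V1_def)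
    show "qpolar s (line_dir A) (line_dir A) = 0" "qpolar s (line_dir B) (line_dir B) = 0"
      using null by (simp_all add: s_def qpolar_self qquad_qcomb qquad_line_prod)
    show "qpolar s (line_dir A) (line_dir B) = 0"
      using n by (simp add: s_def qpolar_qcomb k_def qpolar_line_prod)
  qed
  then have "qderiv r M X = k * qderiv (line_prod A B) M X" for M X
    using qderiv_qcomb[of 1 r "- k" "line_prod A B" M X] by (simp add: s_def[symmetric])
  then show ?thesis by blast
qed

lemma sides_stationary_adjacent_prod:
  assumes two: "(2::'a::field) \<noteq> 0" and q: "quadrilateral (A, B, A', B')"
    and r: "sides_stationary A B A' B' r"
    and k: "\<And>M X. qderiv r M X = k * qderiv (line_prod A (B::'a line)) M X"
  shows "k = 0"
proof (rule ccontr)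
  \<comment> \<open>Otherwise f_A f_B is stationary along A' and B' at their midpoints, which puts the
    vertex A' B' on A and on B.\<close>
  assume "k \<noteq> 0"
  with r k have "qderiv (line_prod A B) (midpt (meet B A') (meet A' B')) (line_dir A') = 0"
    "qderiv (line_prod A B) (midpt (meet A' B') (meet B' A)) (line_dir B') = 0"
    by (simp_all add: sides_stationary_def)
  moreover note V = quadrilateral_vertices[OF q] and f = quadrilateralD[OF q]
  have "qderiv (line_prod B A) (midpt (meet B A') (meet A' B')) (line_dir A')
      = line_lin B (line_dir A') * line_eval A (meet A' B')"
    using qderiv_line_prod_chord_midpt[OF two f(3) V(4) V(5) V(3)] .
  moreover have "qderiv (line_prod A B) (midpt (meet B' A) (meet A' B')) (line_dir B')
      = line_lin A (line_dir B') * line_eval B (meet A' B')"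
    using qderiv_line_prod_chord_midpt[OF two f(4) V(7) V(6) V(8)] .
  moreover have "line_lin B (line_dir A') \<noteq> 0" "line_lin A (line_dir B') \<noteq> 0"
    using nonparallel_lin_dir f(6,8) by blast+
  ultimately have "line_eval A (meet A' B') = 0" "line_eval B (meet A' B') = 0"
    by (simp_all add: line_prod_commute[of B A] midpt_comm[of "meet B' A"])
  then show False using quadrilateral_no_common_point[OF q] V(5,6) by blast
qed

definition in_pencil :: "'a::field line \<Rightarrow> 'a line \<Rightarrow> 'a line \<Rightarrow> 'a line \<Rightarrow> 'a qpoly \<Rightarrow> bool" where
  "in_pencil A B A' B' g \<longleftrightarrow> (\<exists>x y. g = qcomb x (line_prod A A') y (line_prod B B'))"

lemma sides_stationary_imp_in_pencil:
  assumes two: "(2::'a::field) \<noteq> 0" and q: "quadrilateral (A, B, A', B')"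
    and g: "sides_stationary A B A' B' g"
  shows "in_pencil A B A' (B'::'a line) g"
proof -
  note f = quadrilateralD[OF q]
  have n: "line_lin A (line_dir B) \<noteq> 0" "line_lin B (line_dir A) \<noteq> 0"
    "line_lin A' (line_dir B) \<noteq> 0" "line_lin B' (line_dir A) \<noteq> 0"
    using nonparallel_lin_dir f(5,6,8) by blast+
  define x where "x = qquad g (line_dir B) / (line_lin A (line_dir B) * line_lin A' (line_dir B))"
  define y where "y = qquad g (line_dir A) / (line_lin B (line_dir A) * line_lin B' (line_dir A))"
  define p where "p = qcomb x (line_prod A A') y (line_prod B B')"
  \<comment> \<open>x and y make the quadratic part of r vanish on the directions of A and B\<close>
  define r where "r = qcomb 1 g (- 1) p"
  have r_deriv: "qderiv r M X = qderiv g M X - qderiv p M X" for M X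
    by (simp add: r_def qderiv_qcomb)
  have "qquad r (line_dir A) = 0" "qquad r (line_dir B) = 0"
    using n by (simp_all add: r_def p_def qquad_qcomb qquad_line_prod x_def y_def)
  moreover have "sides_stationary A B A' B' r"
    using g sides_stationary_side_prods[OF two q]
    by (simp add: sides_stationary_def r_deriv p_def qderiv_qcomb)
  ultimately obtain k where k: "\<And>M X. qderiv r M X = k * qderiv (line_prod A B) M X"
    using sides_stationary_null_directions[OF two q] by blast
  with sides_stationary_adjacent_prod[OF two q \<open>sides_stationary A B A' B' r\<close>] have "k = 0" by blast
  with k have "g = p" by (intro qpoly_eqI[OF two]) (simp add: r_deriv)
  then show ?thesis unfolding in_pencil_def p_def by blast
qed

section \<open>Q-pairs lie in the pencil\<close>

definition q_pairing :: "'a::field quad \<Rightarrow> 'a qpoly \<Rightarrow> 'a" where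
  "q_pairing Q g = (case g of (a, b, c, d, e) \<Rightarrow> q_alpha Q * a + q_beta Q * b + q_gamma Q * c)"

lemma q_pairing_line_prod: "q_pairing Q (line_prod L L') = q_inner Q (line_dir L) (line_dir L')"
  by (simp add: q_pairing_def line_prod_def q_inner_def line_dir_def algebra_simps)

lemma q_pairing_qcomb: "q_pairing Q (qcomb x g y h) = x * q_pairing Q g + y * q_pairing Q h"
  by (cases g; cases h) (simp add: q_pairing_def qcomb_def algebra_simps)

lemma q_orth_imp_quad_part_in_pencil:
  assumes q: "quadrilateral (A, B, A', B')"
    and orth: "q_orth (A, B, A', B') l1 l2"
  shows "\<exists>x y. \<forall>X. qquad (line_prod l1 l2) X
    = qquad (qcomb x (line_prod A A') y (line_prod B B')) (X::'a::field \<times> 'a)"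
proof -
  note f = quadrilateralD[OF q]
  have n: "line_lin A (line_dir B) \<noteq> 0" "line_lin B (line_dir A) \<noteq> 0"
    "line_lin A' (line_dir B) \<noteq> 0" "line_lin B' (line_dir A) \<noteq> 0" "line_lin A (line_dir B') \<noteq> 0"
    using nonparallel_lin_dir f(5,6,8) by blast+
  define x where
    "x = qquad (line_prod l1 l2) (line_dir B) / (line_lin A (line_dir B) * line_lin A' (line_dir B))"
  define y where
    "y = qquad (line_prod l1 l2) (line_dir A) / (line_lin B (line_dir A) * line_lin B' (line_dir A))"
  define d where "d = qcomb 1 (line_prod l1 l2) (- 1) (qcomb x (line_prod A A') y (line_prod B B'))"
  obtain d1 d2 d3 d4 d5 where dd: "d = (d1, d2, d3, d4, d5)" by (cases d) auto
  have "qquad d (line_dir A) = 0" "qquad d (line_dir B) = 0"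
    using n by (simp_all add: d_def qquad_qcomb qquad_line_prod x_def y_def)
  moreover have "q_pairing (A, B, A', B') d = 0"
    using orth q_orth_opposite_sides[of A B A' B']
    by (simp add: d_def q_pairing_qcomb q_pairing_line_prod q_orth_def line_dir_def)
  ultimately have
    "d1 * u_of A * u_of A + d2 * u_of A * t_of A + d3 * t_of A * t_of A = 0"
    "d1 * u_of B * u_of B + d2 * u_of B * t_of B + d3 * t_of B * t_of B = 0"
    "q_alpha (A, B, A', B') * d1 + q_beta (A, B, A', B') * d2 + q_gamma (A, B, A', B') * d3 = 0"
    by (simp_all add: dd qquad_def line_dir_def q_pairing_def)
  moreover define \<Delta> where "\<Delta> = (t_of A * u_of B - u_of A * t_of B) ^ 2
    * (t_of A * u_of B' - u_of A * t_of B') * (t_of A' * u_of B - u_of A' * t_of B)"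
  ultimately have "\<Delta> * d1 = 0" "\<Delta> * d2 = 0" "\<Delta> * d3 = 0"
    unfolding \<Delta>_def q_alpha_def q_beta_def q_gamma_def prod.case by algebra+
  moreover have "\<Delta> \<noteq> 0" using n by (simp add: \<Delta>_def line_lin_def line_dir_def)
  ultimately have "qquad d X = 0" for X by (simp add: dd qquad_def)
  moreover have "qquad d X = qquad (line_prod l1 l2) X
      - qquad (qcomb x (line_prod A A') y (line_prod B B')) X" for X
    unfolding d_def qquad_qcomb[of 1] by simp
  ultimately show ?thesis by auto
qed

lemma qderiv_null_quad:
  assumes "\<And>X. qquad e X = 0"
  shows "\<exists>k1 k2. \<forall>M X. qderiv e M X = k1 * fst X + k2 * (snd X :: 'a::field)"
proof -
  obtain a b c k1 k2 where e: "e = (a, b, c, k1, k2)" by (cases e) auto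
  have "a = 0" "c = 0" using assms[of "(1, 0)"] assms[of "(0, 1)"] by (simp_all add: e qquad_def)
  moreover from this have "b = 0" using assms[of "(1, 1)"] by (simp add: e qquad_def)
  ultimately show ?thesis by (auto simp: e qderiv_def)
qed

lemma linear_form_vanishing_on_dir:
  assumes "valid_line l" "k1 * u_of l + k2 * t_of l = 0"
  shows "\<exists>c. \<forall>X. k1 * fst X + k2 * snd X = c * line_lin l (X::'a::field \<times> 'a)"
proof (cases "u_of l = 0")
  case True
  with assms have "t_of l = 1" "k2 = 0" by (auto simp: valid_line_def)
  with True show ?thesis by (intro exI[of _ k1]) (simp add: line_lin_def)
next
  case False
  with assms have "u_of l = 1" "k1 = - k2 * t_of l"
    by (auto simp: valid_line_def algebra_simps add_eq_0_iff)
  then show ?thesis by (intro exI[of _ "- k2"]) (simp add: line_lin_def algebra_simps)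
qed

lemma qderiv_line_prod_parallel_lines:
  assumes two: "(2::'a::field) \<noteq> 0" and l: "valid_line l1" "valid_line l2" "parallel l1 l2"
    and p: "line_eval l1 p1 = 0" "line_eval l2 (p2::'a \<times> 'a) = 0"
  shows "qderiv (line_prod l1 l2) M X
    = 2 * line_lin l1 X * line_lin l1 (fst M - fst (midpt p1 p2), snd M - snd (midpt p1 p2))"
proof -
  have "t_of l2 = t_of l1" "u_of l2 = u_of l1" using parallel_valid_coeffs[OF l] by auto
  then have "qderiv (line_prod l1 l2) M X = line_lin l1 X * (line_eval l1 M + line_eval l2 M)"
    by (simp add: qderiv_line_prod line_lin_def algebra_simps)
  also have "line_eval l1 M + line_eval l2 M
      = line_lin l1 (2 * fst M - (fst p1 + fst p2), 2 * snd M - (snd p1 + snd p2))"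
    using p \<open>t_of l2 = t_of l1\<close> \<open>u_of l2 = u_of l1\<close>
    unfolding line_eval_def line_lin_def fst_conv snd_conv by algebra
  also have "\<dots> = 2 * line_lin l1 (fst M - fst (midpt p1 p2), snd M - snd (midpt p1 p2))"
    using two four_neq_zero[OF two] by (simp add: line_lin_def midpt_def field_simps)
  finally show ?thesis by simp
qed

lemma parallel_lines_linear_part_zero:
  assumes two: "(2::'a::field) \<noteq> 0" and l: "valid_line l1" "valid_line l2" "parallel l1 l2"
    and p: "line_eval l1 p1 = 0" "line_eval l2 p2 = 0"
    and h: "\<And>M X. qderiv (line_prod l1 l2) M X = \<kappa> * line_lin l1 X + qderiv g M X"
    and M: "qderiv g M1 (line_dir S) = 0" "qderiv g M2 (line_dir S') = 0"
      "midpt M1 M2 = midpt p1 (p2::'a \<times> 'a)"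
    and n: "line_lin l1 (line_dir S) \<noteq> 0" "line_lin l1 (line_dir S') \<noteq> 0"
  shows "\<kappa> = 0"
proof -
  define c where "c = midpt p1 p2"
  define \<nu> where "\<nu> P = line_lin l1 (fst P - fst c, snd P - snd c)" for P
  have "fst M1 + fst M2 = 2 * fst c" "snd M1 + snd M2 = 2 * snd c"
    using M(3) two by (simp_all add: c_def midpt_def prod_eq_iff field_simps)
  moreover have "\<nu> M1 + \<nu> M2
      = t_of l1 * (fst M1 + fst M2 - 2 * fst c) - u_of l1 * (snd M1 + snd M2 - 2 * snd c)"
    by (simp add: \<nu>_def line_lin_def algebra_simps)
  ultimately have "\<nu> M1 + \<nu> M2 = 0" by simp
  moreover have "\<kappa> = 2 * \<nu> M1" "\<kappa> = 2 * \<nu> M2"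
    using h[of M1 "line_dir S"] h[of M2 "line_dir S'"] M(1,2) n
      qderiv_line_prod_parallel_lines[OF two l p] by (simp_all add: \<nu>_def c_def)
  ultimately have "2 * \<kappa> = 0" by algebra
  with two show ?thesis by simp
qed

lemma parallel_q_pair_linear_part_zero:
  assumes two: "(2::'a::field) \<noteq> 0" and q: "quadrilateral (A, B, A', B')"
    and l: "valid_line (l1::'a line)" "valid_line l2" "parallel l1 l2"
    and p: "line_eval l1 p1 = 0" "line_eval l2 p2 = 0"
    and mc: "midpt p1 p2 = centroid (A, B, A', B')" and g: "sides_stationary A B A' B' g"
    and h: "\<And>M X. qderiv (line_prod l1 l2) M X = \<kappa> * line_lin l1 X + qderiv g M X"
  shows "\<kappa> = 0"
proof -
  note zero = parallel_lines_linear_part_zero[OF two l p h]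
  note C = midpt_opposite_side_midpts[OF two, of B' A B A']
    midpt_opposite_side_midpts(2)[OF two, of A B A' B']
  show ?thesis
  proof (cases "parallel l1 A \<or> parallel l1 A'")
    case False
    then have "line_lin l1 (line_dir A) \<noteq> 0" "line_lin l1 (line_dir A') \<noteq> 0"
      using parallel_iff_lin_dir by blast+
    with g show ?thesis using zero C(1) mc unfolding sides_stationary_def by metis
  next
    case True
    then have "line_lin l1 (line_dir B) \<noteq> 0" "line_lin l1 (line_dir B') \<noteq> 0"
      using quadrilateral_parallel_opposite[OF q l(1)] parallel_iff_lin_dir by blast+
    with g show ?thesis using zero C(3) mc unfolding sides_stationary_def by metis
  qed
qed

lemma q_pair_imp_sides_stationary:
  assumes two: "(2::'a::field) \<noteq> 0" and q: "quadrilateral (A, B, A', B')"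
    and qp: "q_pair (A, B, A', B') l1 l2"
  shows "sides_stationary A B A' B' (line_prod l1 (l2::'a line))"
proof -
  obtain p1 p2 where st: "stationary A B A' B' l1 p1" "stationary A B A' B' l2 p2"
    and mc: "midpt p1 p2 = centroid (A, B, A', B')" and orth: "q_orth (A, B, A', B') l1 l2"
    using qp bisector_mid_iff_stationary[OF two q] unfolding q_pair_def by blast
  then have l: "valid_line l1" "valid_line l2" and p: "line_eval l1 p1 = 0" "line_eval l2 p2 = 0"
    by (auto simp: stationary_def)
  obtain x y where quad: "\<And>X. qquad (line_prod l1 l2) X
      = qquad (qcomb x (line_prod A A') y (line_prod B B')) X"
    using q_orth_imp_quad_part_in_pencil[OF q orth] by blast
  define g where "g = qcomb x (line_prod A A') y (line_prod B B')"
  have g: "sides_stationary A B A' B' g"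
    unfolding g_def by (intro sides_stationary_qcomb sides_stationary_side_prods[OF two q])
  have g_st: "qderiv g p1 (line_dir l1) = 0" "qderiv g p2 (line_dir l2) = 0"
    using st by (simp_all add: g_def qderiv_qcomb stationary_def)
  obtain k1 k2 where k: "\<And>M X. qderiv (qcomb 1 (line_prod l1 l2) (- 1) g) M X = k1 * fst X + k2 * snd X"
    using qderiv_null_quad[of "qcomb 1 (line_prod l1 l2) (- 1) g"] quad
    by (auto simp: qquad_qcomb g_def)
  have split: "qderiv (line_prod l1 l2) M X = (k1 * fst X + k2 * snd X) + qderiv g M X" for M X
    using k[of M X] by (simp add: qderiv_qcomb diff_eq_eq)
  have K: "k1 * u_of l1 + k2 * t_of l1 = 0" "k1 * u_of l2 + k2 * t_of l2 = 0"
    using split[of p1 "line_dir l1"] split[of p2 "line_dir l2"] g_st p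
    by (simp_all add: qderiv_line_prod, simp_all add: line_dir_def)
  have "k1 = 0 \<and> k2 = 0"
  proof (cases "parallel l1 l2")
    case False
    then have "t_of l1 * u_of l2 - u_of l1 * t_of l2 \<noteq> 0" by (simp add: parallel_def mult.commute)
    moreover have "(t_of l1 * u_of l2 - u_of l1 * t_of l2) * k1 = 0"
      "(t_of l1 * u_of l2 - u_of l1 * t_of l2) * k2 = 0" using K by algebra+
    ultimately show ?thesis by simp
  next
    case True
    obtain \<kappa> where \<kappa>: "\<And>X. k1 * fst X + k2 * snd X = \<kappa> * line_lin l1 X"
      using linear_form_vanishing_on_dir[OF l(1) K(1)] by blast
    then have h: "qderiv (line_prod l1 l2) M X = \<kappa> * line_lin l1 X + qderiv g M X" for M X
      using split by simp
    have "\<kappa> = 0" using parallel_q_pair_linear_part_zero[OF two q l(1,2) True p mc g h] .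
    then show ?thesis using \<kappa>[of "(1, 0)"] \<kappa>[of "(0, 1)"] by simp
  qed
  then show ?thesis using g by (simp add: sides_stationary_def split)
qed

section \<open>Quadrilaterals with a common pencil\<close>

definition qjac :: "'a::field qpoly \<Rightarrow> 'a qpoly \<Rightarrow> 'a \<times> 'a \<Rightarrow> 'a" where
  "qjac g h M = qderiv g M (1, 0) * qderiv h M (0, 1) - qderiv g M (0, 1) * qderiv h M (1, 0)"

lemma qjac_qcomb:
  "qjac (qcomb x g y h) (qcomb x' g y' h) M = (x * y' - y * x') * qjac g h M"
  unfolding qjac_def qderiv_qcomb by algebra

lemma qjac_side_prods:
  "qjac (line_prod A A') (line_prod B B') M =
      line_lin B' (line_dir A') * line_eval A M * line_eval B M
    + line_lin B (line_dir A') * line_eval A M * line_eval B' M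
    + line_lin B' (line_dir A) * line_eval A' M * line_eval B M
    + line_lin B (line_dir A) * line_eval A' M * line_eval B' M"
  unfolding qjac_def qderiv_line_prod by (simp add: line_lin_def line_dir_def algebra_simps)

definition centroid_hom :: "'a::field quad \<Rightarrow> 'a \<times> 'a \<times> 'a" where
  "centroid_hom Q = (case Q of (A, B, A', B') \<Rightarrow>
     let (x1, y1, z1) = meet_hom A B; (x2, y2, z2) = meet_hom B A';
         (x3, y3, z3) = meet_hom A' B'; (x4, y4, z4) = meet_hom B' A
     in (x1 * z2 * z3 * z4 + x2 * z1 * z3 * z4 + x3 * z1 * z2 * z4 + x4 * z1 * z2 * z3,
         y1 * z2 * z3 * z4 + y2 * z1 * z3 * z4 + y3 * z1 * z2 * z4 + y4 * z1 * z2 * z3,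
         4 * z1 * z2 * z3 * z4))"

lemma line_eval_centroid:
  assumes two: "(2::'a::field) \<noteq> 0" and q: "quadrilateral (A, B, A', B')"
  shows "line_eval L (centroid (A, B, A', B')) * snd (snd (centroid_hom (A, B, A', B')))
    = line_eval_hom L (centroid_hom (A, B, A', (B'::'a line)))"
proof -
  note f = quadrilateralD[OF q]
  obtain x1 y1 z1 where 1: "meet_hom A B = (x1, y1, z1)" by (cases "meet_hom A B") auto
  obtain x2 y2 z2 where 2: "meet_hom B A' = (x2, y2, z2)" by (cases "meet_hom B A'") auto
  obtain x3 y3 z3 where 3: "meet_hom A' B' = (x3, y3, z3)" by (cases "meet_hom A' B'") auto
  obtain x4 y4 z4 where 4: "meet_hom B' A = (x4, y4, z4)" by (cases "meet_hom B' A") auto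
  define sx where "sx = fst (meet A B) + fst (meet B A') + fst (meet A' B') + fst (meet B' A)"
  define sy where "sy = snd (meet A B) + snd (meet B A') + snd (meet A' B') + snd (meet B' A)"
  have "centroid (A, B, A', B') = (sx / 4, sy / 4)" by (simp add: centroid_def Let_def sx_def sy_def)
  then have "line_eval L (centroid (A, B, A', B')) * 4 = line_eval_hom L (sx, sy, 4)"
    using line_eval_dehom[OF four_neq_zero[OF two]] by simp
  also have "\<dots> = line_eval L (meet A B) + line_eval L (meet B A')
      + line_eval L (meet A' B') + line_eval L (meet B' A)"
    by (simp add: line_eval_hom_def line_eval_def sx_def sy_def algebra_simps)
  finally have c4: "line_eval L (centroid (A, B, A', B')) * 4 = \<dots>" .
  then have "line_eval L (centroid (A, B, A', B')) * (4 * z1 * z2 * z3 * z4)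
      = (line_eval L (meet A B) * z1) * z2 * z3 * z4 + (line_eval L (meet B A') * z2) * z1 * z3 * z4
      + (line_eval L (meet A' B') * z3) * z1 * z2 * z4 + (line_eval L (meet B' A) * z4) * z1 * z2 * z3"
    by (simp add: algebra_simps)
  also have "\<dots> = line_eval_hom L (x1, y1, z1) * z2 * z3 * z4 + line_eval_hom L (x2, y2, z2) * z1 * z3 * z4
      + line_eval_hom L (x3, y3, z3) * z1 * z2 * z4 + line_eval_hom L (x4, y4, z4) * z1 * z2 * z3"
    using line_eval_meet[OF f(5), of L] line_eval_meet[OF f(6), of L]
      line_eval_meet[OF f(7), of L] line_eval_meet[OF f(8), of L] by (simp add: 1 2 3 4)
  finally show ?thesis
    by (simp add: 1 2 3 4 centroid_hom_def line_eval_hom_def algebra_simps)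
qed

lemma centroid_hom_weight_nonzero:
  assumes two: "(2::'a::field) \<noteq> 0" and q: "quadrilateral (A, B, A', B')"
  shows "snd (snd (centroid_hom (A, B, A', (B'::'a line)))) \<noteq> 0"
  using four_neq_zero[OF two] meet_hom_weight_nonzero quadrilateralD(5-8)[OF q]
  by (simp add: centroid_hom_def meet_hom_def Let_def) blast

text \<open>Cleared of denominators, this says that the Jacobian of the two side products has
  vanishing gradient at the centroid.\<close>

lemma centroid_hom_jacobian_identity:
  fixes A B A' B' :: "'a::field line"
  defines "W \<equiv> centroid_hom (A, B, A', B')"
  shows "line_lin B' (line_dir A') * (line_eval_hom A W * line_lin B X + line_eval_hom B W * line_lin A X)
    + line_lin B (line_dir A') * (line_eval_hom A W * line_lin B' X + line_eval_hom B' W * line_lin A X)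
    + line_lin B' (line_dir A) * (line_eval_hom A' W * line_lin B X + line_eval_hom B W * line_lin A' X)
    + line_lin B (line_dir A) * (line_eval_hom A' W * line_lin B' X + line_eval_hom B' W * line_lin A' X)
    = 0"
  unfolding W_def centroid_hom_def meet_hom_def line_eval_hom_def line_lin_def line_dir_def
    Let_def prod.case fst_conv snd_conv
  by algebra

lemma qjac_side_prods_centroid:
  assumes two: "(2::'a::field) \<noteq> 0" and q: "quadrilateral (A, B, A', B')"
  defines "c \<equiv> centroid (A, B, A', B')"
  shows "qjac (line_prod A A') (line_prod B B') (offset c 1 X)
    = qjac (line_prod A A') (line_prod B (B'::'a line)) c - 2 * q_inner (A, B, A', B') X X"
proof -
  define W where "W = centroid_hom (A, B, A', B')"
  define lp where
    "lp = line_lin B' (line_dir A') * (line_eval A c * line_lin B X + line_eval B c * line_lin A X)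
    + line_lin B (line_dir A') * (line_eval A c * line_lin B' X + line_eval B' c * line_lin A X)
    + line_lin B' (line_dir A) * (line_eval A' c * line_lin B X + line_eval B c * line_lin A' X)
    + line_lin B (line_dir A) * (line_eval A' c * line_lin B' X + line_eval B' c * line_lin A' X)"
  have "line_eval_hom L W = line_eval L c * snd (snd W)" for L
    using line_eval_centroid[OF two q] by (simp add: W_def c_def)
  note identity = centroid_hom_jacobian_identity[where A = A and B = B and A' = A' and B' = B' and X = X,
      folded W_def, unfolded this]
  have "lp * snd (snd W) = 0" using identity unfolding lp_def by algebra
  then have "lp = 0" using centroid_hom_weight_nonzero[OF two q] by (simp add: W_def)
  moreover have "line_lin B' (line_dir A') * (line_lin A X * line_lin B X)
      + line_lin B (line_dir A') * (line_lin A X * line_lin B' X)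
      + line_lin B' (line_dir A) * (line_lin A' X * line_lin B X)
      + line_lin B (line_dir A) * (line_lin A' X * line_lin B' X) = - 2 * q_inner (A, B, A', B') X X"
    unfolding line_lin_def line_dir_def q_inner_def q_alpha_def q_beta_def q_gamma_def prod.case
      fst_conv snd_conv
    by algebra
  ultimately show ?thesis
    unfolding qjac_side_prods line_eval_offset lp_def by (simp add: algebra_simps)
qed

lemma quadratic_poly_eq_zero:
  fixes a b c d e f :: "'a::field"
  assumes two: "(2::'a) \<noteq> 0"
    and h: "\<And>x y. a * x * x + b * x * y + c * y * y + d * x + e * y + f = 0"
  shows "a = 0 \<and> b = 0 \<and> c = 0 \<and> d = 0 \<and> e = 0 \<and> f = 0"
proof -
  have "f = 0" "a + d + f = 0" "a - d + f = 0" "c + e + f = 0" "c - e + f = 0"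
    "a + b + c + d + e + f = 0"
    using h[of 0 0] h[of 1 0] h[of "- 1" 0] h[of 0 1] h[of 0 "- 1"] h[of 1 1] by simp_all
  then have "2 * a = 0" "2 * d = 0" "2 * c = 0" "2 * e = 0" by algebra+
  with two \<open>f = 0\<close> \<open>a + b + c + d + e + f = 0\<close> show ?thesis by simp
qed

lemma q_form_nondegenerate:
  assumes "quadrilateral (A, B, A', B')"
  shows "q_beta (A, B, A', B') * q_beta (A, B, A', B')
    - q_alpha (A, B, A', B') * q_gamma (A, B, A', (B'::'a::field line)) \<noteq> 0"
proof -
  have "q_beta (A, B, A', B') * q_beta (A, B, A', B') - q_alpha (A, B, A', B') * q_gamma (A, B, A', B')
     = line_lin B (line_dir A) * line_lin B' (line_dir A)
       * line_lin B (line_dir A') * line_lin B' (line_dir A')"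
    unfolding q_alpha_def q_beta_def q_gamma_def line_lin_def line_dir_def prod.case fst_conv snd_conv
    by algebra
  moreover have "line_lin B (line_dir A) \<noteq> 0" "line_lin B' (line_dir A) \<noteq> 0"
    "line_lin B (line_dir A') \<noteq> 0" "line_lin B' (line_dir A') \<noteq> 0"
    using nonparallel_lin_dir quadrilateralD(5-8)[OF assms] by blast+
  ultimately show ?thesis by simp
qed

lemma stationary_pencil_eq:
  assumes "line_prod C C' = qcomb x (line_prod A A') y (line_prod B B')"
    and "line_prod D D' = qcomb x' (line_prod A A') y' (line_prod B B')"
    and "x * y' - y * x' \<noteq> 0"
  shows "stationary C D C' D' l M \<longleftrightarrow> stationary A B A' B' l M"
proof -
  let ?a = "qderiv (line_prod A A') M (line_dir l)" and ?b = "qderiv (line_prod B B') M (line_dir l)"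
  have "?a = 0 \<and> ?b = 0" if "x * ?a + y * ?b = 0" "x' * ?a + y' * ?b = 0"
  proof -
    from that have "(x * y' - y * x') * ?a = 0" "(x * y' - y * x') * ?b = 0" by algebra+
    with assms(3) show ?thesis by simp
  qed
  then show ?thesis using assms(1,2) by (auto simp: stationary_def qderiv_qcomb)
qed

lemma proportional_jacobians:
  assumes two: "(2::'a::field) \<noteq> 0"
    and q1: "quadrilateral (A, B, A', B')" and q2: "quadrilateral (C, D, C', D')"
    and J: "\<And>M. qjac (line_prod C C') (line_prod D D') M
      = k * qjac (line_prod A A') (line_prod B (B'::'a line)) M"
  shows "centroid (C, D, C', D') = centroid (A, B, A', B')" and "k \<noteq> 0"
    and "q_inner (C, D, C', D') v w = k * q_inner (A, B, A', B') v w"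
proof -
  define c1 c2 where "c1 = centroid (A, B, A', B')" and "c2 = centroid (C, D, C', D')"
  define J1 J2 where "J1 = qjac (line_prod A A') (line_prod B B')"
    and "J2 = qjac (line_prod C C') (line_prod D D')"
  define d1 d2 where "d1 = fst c2 - fst c1" and "d2 = snd c2 - snd c1"
  define \<alpha>1 \<beta>1 \<gamma>1 where "\<alpha>1 = q_alpha (A, B, A', B')" and "\<beta>1 = q_beta (A, B, A', B')"
    and "\<gamma>1 = q_gamma (A, B, A', B')"
  define \<alpha>2 \<beta>2 \<gamma>2 where "\<alpha>2 = q_alpha (C, D, C', D')" and "\<beta>2 = q_beta (C, D, C', D')"
    and "\<gamma>2 = q_gamma (C, D, C', D')"
  have expand: "J2 c2 - 2 * q_inner (C, D, C', D') (X1, X2) (X1, X2)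
      = k * (J1 c1 - 2 * q_inner (A, B, A', B') (d1 + X1, d2 + X2) (d1 + X1, d2 + X2))" for X1 X2
  proof -
    have "J2 c2 - 2 * q_inner (C, D, C', D') (X1, X2) (X1, X2) = J2 (offset c2 1 (X1, X2))"
      using qjac_side_prods_centroid[OF two q2] by (simp add: J2_def c2_def)
    also have "offset c2 1 (X1, X2) = offset c1 1 (d1 + X1, d2 + X2)"
      by (simp add: offset_def d1_def d2_def)
    also have "J2 \<dots> = k * (J1 c1 - 2 * q_inner (A, B, A', B') (d1 + X1, d2 + X2) (d1 + X1, d2 + X2))"
      using J qjac_side_prods_centroid[OF two q1] by (simp add: J1_def J2_def c1_def)
    finally show ?thesis .
  qed
  have "(2 * k * \<gamma>1 - 2 * \<gamma>2) * X1 * X1 + (4 * \<beta>2 - 4 * k * \<beta>1) * X1 * X2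
      + (2 * k * \<alpha>1 - 2 * \<alpha>2) * X2 * X2 + (4 * k * (\<gamma>1 * d1 - \<beta>1 * d2)) * X1
      + (4 * k * (\<alpha>1 * d2 - \<beta>1 * d1)) * X2
      + (J2 c2 - k * J1 c1 + 2 * k * q_inner (A, B, A', B') (d1, d2) (d1, d2)) = 0" for X1 X2
    using expand[of X1 X2]
    unfolding q_inner_def \<alpha>1_def \<beta>1_def \<gamma>1_def \<alpha>2_def \<beta>2_def \<gamma>2_def fst_conv snd_conv by algebra
  from quadratic_poly_eq_zero[OF two this] two four_neq_zero[OF two]
  have \<alpha>\<beta>\<gamma>: "\<alpha>2 = k * \<alpha>1" "\<beta>2 = k * \<beta>1" "\<gamma>2 = k * \<gamma>1"
    and d: "k * (\<gamma>1 * d1 - \<beta>1 * d2) = 0" "k * (\<alpha>1 * d2 - \<beta>1 * d1) = 0"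
    by auto
  show "k \<noteq> 0"
    using q_form_nondegenerate[OF q2] \<alpha>\<beta>\<gamma> by (auto simp: \<alpha>2_def \<beta>2_def \<gamma>2_def)
  with d have "(\<beta>1 * \<beta>1 - \<alpha>1 * \<gamma>1) * d1 = 0" "(\<beta>1 * \<beta>1 - \<alpha>1 * \<gamma>1) * d2 = 0"
    by algebra+
  with q_form_nondegenerate[OF q1] have "d1 = 0" "d2 = 0" by (auto simp: \<alpha>1_def \<beta>1_def \<gamma>1_def)
  then show "centroid (C, D, C', D') = centroid (A, B, A', B')"
    by (simp add: d1_def d2_def c1_def c2_def prod_eq_iff)
  show "q_inner (C, D, C', D') v w = k * q_inner (A, B, A', B') v w"
    using \<alpha>\<beta>\<gamma> unfolding \<alpha>1_def \<beta>1_def \<gamma>1_def \<alpha>2_def \<beta>2_def \<gamma>2_def q_inner_def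
    by (simp add: algebra_simps)
qed

lemma pencil_transfer:
  assumes two: "(2::'a::field) \<noteq> 0"
    and q1: "quadrilateral (A, B, A', B')" and q2: "quadrilateral (C, D, C', D')"
    and C: "in_pencil A B A' B' (line_prod C C')"
    and D: "in_pencil A B A' B' (line_prod D (D'::'a line))"
  shows "centroid (C, D, C', D') = centroid (A, B, A', B')"
    and "\<exists>k. k \<noteq> 0 \<and> (\<forall>v w. q_inner (C, D, C', D') v w = k * q_inner (A, B, A', B') v w)"
    and "stationary C D C' D' l M \<longleftrightarrow> stationary A B A' B' l M"
proof -
  obtain x y x' y' where
    h1: "line_prod C C' = qcomb x (line_prod A A') y (line_prod B B')" and
    h2: "line_prod D D' = qcomb x' (line_prod A A') y' (line_prod B B')"
    using C D unfolding in_pencil_def by blast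
  note jac = proportional_jacobians[OF two q1 q2, of "x * y' - y * x'"]
  have J: "qjac (line_prod C C') (line_prod D D') M
      = (x * y' - y * x') * qjac (line_prod A A') (line_prod B B') M" for M
    by (simp add: h1 h2 qjac_qcomb)
  show "centroid (C, D, C', D') = centroid (A, B, A', B')" using jac(1)[OF J] .
  show "\<exists>k. k \<noteq> 0 \<and> (\<forall>v w. q_inner (C, D, C', D') v w = k * q_inner (A, B, A', B') v w)"
    using jac(2,3)[OF J] by blast
  show "stationary C D C' D' l M \<longleftrightarrow> stationary A B A' B' l M"
    using stationary_pencil_eq[OF h1 h2 jac(2)[OF J]] .
qed

lemma bisector_mid_Aff_iff:
  assumes "(2::'a::field) \<noteq> 0" "quadrilateral (A, B, A', B')"
  shows "bisector_mid (A, B, A', B') l (Aff M) \<longleftrightarrow> stationary A B A' B' (l::'a line) M"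
  using bisector_mid_iff_stationary[OF assms, of l "Aff M"] by blast

lemma pencil_imp_same_bisectors_and_field:
  assumes two: "(2::'a::field) \<noteq> 0"
    and q1: "quadrilateral (A, B, A', B')" and q2: "quadrilateral (C, D, C', D')"
    and C: "in_pencil A B A' B' (line_prod C C')"
    and D: "in_pencil A B A' B' (line_prod D (D'::'a line))"
  shows "(\<forall>l m. bisector_mid (A, B, A', B') l m \<longleftrightarrow> bisector_mid (C, D, C', D') l m)
    \<and> bisector_field (A, B, A', B') = bisector_field (C, D, C', D')"
proof -
  note transfer = pencil_transfer[OF two q1 q2 C D]
  have bm: "bisector_mid (C, D, C', D') l m \<longleftrightarrow> bisector_mid (A, B, A', B') l m" for l m
    using bisector_mid_iff_stationary[OF two q1] bisector_mid_iff_stationary[OF two q2] transfer(3)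
    by simp
  obtain k where "k \<noteq> 0" "\<And>v w. q_inner (C, D, C', D') v w = k * q_inner (A, B, A', B') v w"
    using transfer(2) by blast
  then have "q_orth (C, D, C', D') l1 l2 \<longleftrightarrow> q_orth (A, B, A', B') l1 l2" for l1 l2
    by (simp add: q_orth_def)
  then have "q_pair (C, D, C', D') l1 l2 \<longleftrightarrow> q_pair (A, B, A', B') l1 l2" for l1 l2
    unfolding q_pair_def by (simp add: bm transfer(1))
  then show ?thesis using bm unfolding bisector_field_def by simp
qed

lemma same_bisectors_imp_in_pencil:
  assumes two: "(2::'a::field) \<noteq> 0"
    and q1: "quadrilateral (A, B, A', B')" and q2: "quadrilateral (C, D, C', D')"
    and bm: "\<forall>l m. bisector_mid (A, B, A', B') l m \<longleftrightarrow> bisector_mid (C, D, C', D') l m"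
  shows "in_pencil A B A' B' (line_prod C C') \<and> in_pencil A B A' B' (line_prod D (D'::'a line))"
proof -
  have "stationary C D C' D' l M" if "stationary A B A' B' l M" for l M
    using that bm bisector_mid_Aff_iff[OF two q1] bisector_mid_Aff_iff[OF two q2] by blast
  then have "sides_stationary A B A' B' (line_prod C C')" "sides_stationary A B A' B' (line_prod D D')"
    using stationary_sides[OF two q1] by (simp_all add: sides_stationary_def stationary_def)
  then show ?thesis using sides_stationary_imp_in_pencil[OF two q1] by blast
qed

lemma same_field_imp_in_pencil:
  assumes two: "(2::'a::field) \<noteq> 0"
    and q1: "quadrilateral (A, B, A', B')" and q2: "quadrilateral (C, D, C', D')"
    and bf: "bisector_field (A, B, A', B') = bisector_field (C, D, C', D')"
  shows "in_pencil A B A' B' (line_prod C C') \<and> in_pencil A B A' B' (line_prod D (D'::'a line))"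
proof -
  have "in_pencil A B A' B' (line_prod L L')" if "q_pair (C, D, C', D') L L'" for L L'
  proof -
    have "{L, L'} \<in> bisector_field (A, B, A', B')" using that bf unfolding bisector_field_def by blast
    then obtain l1 l2 where "{L, L'} = {l1, l2}" and "q_pair (A, B, A', B') l1 l2"
      unfolding bisector_field_def by blast
    moreover from this have "line_prod L L' = line_prod l1 l2"
      by (auto simp: doubleton_eq_iff line_prod_commute)
    ultimately show ?thesis
      using q_pair_imp_sides_stationary[OF two q1] sides_stationary_imp_in_pencil[OF two q1] by metis
  qed
  then show ?thesis using q_pair_opposite_sides[OF two q2] by blast
qed

theorem corollary6p10:
  fixes Q1 Q2 :: "'a::field quad"
  assumes "(2::'a) \<noteq> 0"
    and "quadrilateral Q1" and "quadrilateral Q2"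
  shows "(\<forall>l m. bisector_mid Q1 l m \<longleftrightarrow> bisector_mid Q2 l m)
         \<longleftrightarrow> bisector_field Q1 = bisector_field Q2"
proof -
  obtain A B A' B' C D C' D' where Q: "Q1 = (A, B, A', B')" "Q2 = (C, D, C', D')"
    by (metis prod.collapse)
  note q = assms(2,3)[unfolded Q]
  show ?thesis unfolding Q
    using pencil_imp_same_bisectors_and_field[OF assms(1) q] same_bisectors_imp_in_pencil[OF assms(1) q]
      same_field_imp_in_pencil[OF assms(1) q] by blast
qed

end
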